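(* Let $\gamma,\kappa\ge 2$, memory $m\ge 0$, coupling length $L\ge m+1$ and lifting degree $Z\ge1$, and consider a random QC-SC-LDPC code built from the $\gamma\times\kappa$ fully-connected base graph with uniform edge-spreading over $\{0,1,\ldots,m\}$ and uniform random lifting. Let $\Delta=(2\gamma-3)(2\kappa-3)$ and $$I=\frac{(\Delta-1)^{\Delta-1}}{\Delta^{\Delta}},\qquad II=\frac{27}{256(\gamma\kappa-\gamma-\kappa)}.$$ If $$\frac{2m^2+4m+3}{3(m+1)^3Z}\le\max\{I,II\},$$ then the probability that no 4-cycle candidate $c_4\in\mathcal{C}_4$ is active satisfies $$P\Big(\bigcap_{c_4\in\mathcal{C}_4}\overline{c_4}\Big)\ge\begin{cases}\left(1-\frac{2}{\Delta}\right)^{\frac{\gamma(\gamma-1)\kappa(\kappa-1)\Delta}{8}}, & \text{if } I>II,\\[2pt] \left(1-\frac{\gamma\kappa-\gamma-\kappa+1}{4(\gamma\kappa-\gamma-\kappa)}\right)^{\gamma\kappa}, & \text{otherwise,}\end{cases}$$ and in particular (this probability being positive) there exists such a QC-SC-LDPC code whose Tanner graph has girth at least 6.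
   Context: The base graph is the complete bipartite graph with check nodes $[\gamma]$, variable nodes $[\kappa]$ and edges $[\gamma]\times[\kappa]$ (all-one base matrix, no parallel edges). The code is determined by a partition matrix $\mathbf{P}\in\{0,\ldots,m\}^{\gamma\times\kappa}$ (edge $(i,j)$ goes to component matrix $\mathbf{H}_{\mathbf{P}(i,j)}$; the protograph is formed by stacking $\mathbf{H}_0,\ldots,\mathbf{H}_m$ into a replica and coupling $L$ replicas) and a lifting matrix $\mathbf{L}\in\{0,\ldots,Z-1\}^{\gamma\times\kappa}$ (entry replaced by the circulant permutation matrix $\sigma^{\mathbf{L}(i,j)}$). Randomly, the entries of $\mathbf{P}$ are i.i.d. uniform on $\{0,\ldots,m\}$ and the entries of $\mathbf{L}$ are i.i.d. uniform on $\{0,\ldots,Z-1\}$, independently. $\mathcal{C}_4$ is the set of 4-cycle candidates $(j_1,i_1,j_2,i_2)$ of the base graph (choice of two distinct rows $i_1,i_2$ and two distinct columns $j_1,j_2$); such a candidate is active iff $\mathbf{P}(i_1,j_1)+\mathbf{P}(i_2,j_2)=\mathbf{P}(i_1,j_2)+\mathbf{P}(i_2,j_1)$ and $\mathbf{L}(i_1,j_1)+\mathbf{L}(i_2,j_2)\equiv\mathbf{L}(i_1,j_2)+\mathbf{L}(i_2,j_1)\pmod Z$, and the Tanner graph has girth at least 6 iff no 4-cycle candidate is active. *)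

theory Defs
  imports "HOL-Analysis.Analysis"
begin

text \<open>Matrices are functions on index pairs (row i < gamma, column j < kappa),
  extensional (undefined outside the index set).\<close>

definition base_edges :: "nat \<Rightarrow> nat \<Rightarrow> (nat \<times> nat) set" where
  "base_edges \<gamma> \<kappa> = {0..<\<gamma>} \<times> {0..<\<kappa>}"

definition partition_matrices :: "nat \<Rightarrow> nat \<Rightarrow> nat \<Rightarrow> (nat \<times> nat \<Rightarrow> nat) set" where
  "partition_matrices \<gamma> \<kappa> m = base_edges \<gamma> \<kappa> \<rightarrow>\<^sub>E {0..m}"

definition lifting_matrices :: "nat \<Rightarrow> nat \<Rightarrow> nat \<Rightarrow> (nat \<times> nat \<Rightarrow> nat) set" where
  "lifting_matrices \<gamma> \<kappa> Z = base_edges \<gamma> \<kappa> \<rightarrow>\<^sub>E {0..<Z}"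

definition cycle4_candidates :: "nat \<Rightarrow> nat \<Rightarrow> (nat \<times> nat \<times> nat \<times> nat) set" where
  "cycle4_candidates \<gamma> \<kappa> =
     {(j1, i1, j2, i2). i1 < \<gamma> \<and> i2 < \<gamma> \<and> i1 \<noteq> i2 \<and> j1 < \<kappa> \<and> j2 < \<kappa> \<and> j1 \<noteq> j2}"

definition cycle4_active ::
  "nat \<Rightarrow> (nat \<times> nat \<Rightarrow> nat) \<Rightarrow> (nat \<times> nat \<Rightarrow> nat) \<Rightarrow> nat \<times> nat \<times> nat \<times> nat \<Rightarrow> bool" where
  "cycle4_active Z P Lm c = (case c of (j1, i1, j2, i2) \<Rightarrow>
      P (i1, j1) + P (i2, j2) = P (i1, j2) + P (i2, j1) \<and>
      (Lm (i1, j1) + Lm (i2, j2)) mod Z = (Lm (i1, j2) + Lm (i2, j1)) mod Z)"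

definition prob_no_active_c4 :: "nat \<Rightarrow> nat \<Rightarrow> nat \<Rightarrow> nat \<Rightarrow> real" where
  "prob_no_active_c4 \<gamma> \<kappa> m Z =
     real (card {(P, Lm) \<in> partition_matrices \<gamma> \<kappa> m \<times> lifting_matrices \<gamma> \<kappa> Z.
                   \<forall>c \<in> cycle4_candidates \<gamma> \<kappa>. \<not> cycle4_active Z P Lm c})
     / real (card (partition_matrices \<gamma> \<kappa> m \<times> lifting_matrices \<gamma> \<kappa> Z))"

end

theory Submission
  imports Defs
begin

(* Fill in the entry pairs (P(i,j), L(i,j)) one edge at a time, in order of increasing i + j.
   A 4-cycle candidate on rows i' < i and columns j' < j is completed at the edge (i,j), and once
   its other three entries are fixed, at most one of the M = (m+1)Z possible values of the last
   entry makes it active.  So at most i*j values are forbidden at (i,j), and the fraction of pairs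
   (P,L) without an active candidate is at least the product of 1 - ij/M over all edges.  The
   hypothesis forces M to be large compared with Delta, resp. with gamma*kappa - gamma - kappa,
   and elementary estimates of this product give the two stated bounds, which are positive. *)

lemma card_PiE_avoiding_ge:
  fixes rank :: "'e \<Rightarrow> 'k::linorder" and Bad :: "'e \<Rightarrow> ('e \<Rightarrow> 'a) \<Rightarrow> 'a set"
  assumes "finite E" and "finite A"
    and Bad_card: "\<And>e f. card (A \<inter> Bad e f) \<le> c e"
    and Bad_local: "\<And>e f g. (\<And>e'. rank e' < rank e \<Longrightarrow> f e' = g e') \<Longrightarrow> Bad e f = Bad e g"
  shows "(\<Prod>e\<in>E. card A - c e) \<le> card {f \<in> E \<rightarrow>\<^sub>E A. \<forall>e\<in>E. f e \<notin> Bad e f}"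
  using \<open>finite E\<close>
proof (induction E rule: finite_ranking_induct[where f = rank])
  case empty
  then show ?case by simp
next
  case (insert x S)
  define G where "G S = {f \<in> S \<rightarrow>\<^sub>E A. \<forall>e\<in>S. f e \<notin> Bad e f}" for S
  show ?case
  proof (cases "x \<in> S")
    case True
    then show ?thesis using insert.IH by (simp add: insert_absorb)
  next
    case False
    let ?extend = "\<lambda>(f, a). f(x := a)"
    let ?choices = "SIGMA f:G S. A - Bad x f"
    have "finite (G S)"
      unfolding G_def using insert.hyps(1) \<open>finite A\<close> by (simp add: finite_PiE)
    have into: "?extend ` ?choices \<subseteq> G (insert x S)"
    proof clarify
      fix f a assume f: "f \<in> G S" and a: "a \<in> A" "a \<notin> Bad x f"
      have "Bad e (f(x := a)) = Bad e f" if "e \<in> insert x S" for e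
        by (rule Bad_local) (use that insert.hyps(2) in \<open>auto simp: not_less[symmetric]\<close>)
      then show "f(x := a) \<in> G (insert x S)"
        using f a False unfolding G_def by (auto simp: PiE_def extensional_def Pi_def)
    qed
    have inj: "inj_on ?extend ?choices"
    proof (rule inj_onI, clarify)
      fix f a g b assume "f \<in> G S" "g \<in> G S" and eq: "f(x := a) = g(x := b)"
      then have "f x = g x" using False unfolding G_def by (auto simp: PiE_def extensional_def)
      then show "f = g \<and> a = b" using eq by (metis fun_upd_triv fun_upd_upd fun_upd_same)
    qed
    have "finite (G (insert x S))"
      unfolding G_def using insert.hyps(1) \<open>finite A\<close> by (simp add: finite_PiE)
    have "card (A - Bad x f) \<ge> card A - c x" for f
      using Bad_card[of x f] \<open>finite A\<close> by (simp add: card_Diff_subset_Int)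
    then have choices_ge: "card (G S) * (card A - c x) \<le> (\<Sum>f\<in>G S. card (A - Bad x f))"
      using sum_mono[of "G S" "\<lambda>_. card A - c x"] by simp
    have "(\<Prod>e\<in>insert x S. card A - c e) = (\<Prod>e\<in>S. card A - c e) * (card A - c x)"
      using insert.hyps(1) False by (simp add: mult.commute)
    also have "\<dots> \<le> card (G S) * (card A - c x)"
      using insert.IH unfolding G_def by (rule mult_le_mono1)
    also have "\<dots> \<le> (\<Sum>f\<in>G S. card (A - Bad x f))"
      by (rule choices_ge)
    also have "\<dots> = card ?choices"
      using \<open>finite (G S)\<close> \<open>finite A\<close> by simp
    also have "\<dots> \<le> card (G (insert x S))"
      using card_inj_on_le[OF inj into \<open>finite (G (insert x S))\<close>] .
    finally show ?thesis unfolding G_def .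
  qed
qed

lemma pred_power_div_power_le:
  assumes "2 \<le> d"
  shows "real (d - 1) ^ (d - 1) / real d ^ d \<le> 1 / (2 * real d)"
proof -
  have pred: "real (d - 1) = real d - 1" and "real d - 1 > 0"
    using assms by (simp_all add: of_nat_diff)
  have "0 \<le> 1 / (real d - 1)" using \<open>real d - 1 > 0\<close> by simp
  then have "1 + real (d - 1) * (1 / (real d - 1)) \<le> (1 + 1 / (real d - 1)) ^ (d - 1)"
    by (intro Bernoulli_inequality) linarith
  then have "2 \<le> (real d / (real d - 1)) ^ (d - 1)"
    using \<open>real d - 1 > 0\<close> pred by (simp add: field_simps)
  then have "2 * (real d - 1) ^ (d - 1) \<le> real d ^ (d - 1)"
    using \<open>real d - 1 > 0\<close> by (simp add: power_divide field_simps)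
  moreover have "real d ^ d = real d * real d ^ (d - 1)"
    using assms by (cases d) auto
  ultimately show ?thesis using pred \<open>real d - 1 > 0\<close> by (simp add: field_simps)
qed

lemma exp_neg_le_one_minus_divide:
  fixes c M :: real
  assumes "0 \<le> c" and "c + 1 \<le> M"
  shows "exp (- c) \<le> 1 - c / M"
proof -
  have "exp (- c) \<le> 1 / (1 + c)"
    using exp_ge_add_one_self[of c] assms(1) by (simp add: exp_minus field_simps)
  also have "\<dots> \<le> 1 - c / M"
    using assms mult_right_mono[OF assms(2) assms(1)] by (simp add: field_simps)
  finally show ?thesis .
qed

lemma powr_one_minus_le_exp:
  fixes x t :: real
  assumes "x \<le> 1" and "0 \<le> t"
  shows "(1 - x) powr t \<le> exp (- (x * t))"
proof (cases "x = 1")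
  case False
  then have "ln (1 - x) \<le> - x" using assms(1) ln_le_minus_one[of "1 - x"] by simp
  then have "t * ln (1 - x) \<le> t * (- x)" by (rule mult_left_mono) (use assms(2) in simp)
  then show ?thesis using False assms(1) by (simp add: powr_def mult.commute)
qed simp

lemma cycle4_active_iff_ordered:
  "cycle4_active Z P L (j1, i1, j2, i2) \<longleftrightarrow>
     cycle4_active Z P L (max j1 j2, max i1 i2, min j1 j2, min i1 i2)"
  unfolding cycle4_active_def max_def min_def by (auto simp: add.commute)

lemma no_active_cycle4_if_no_ordered:
  assumes "\<And>i j i' j'. i < \<gamma> \<Longrightarrow> j < \<kappa> \<Longrightarrow> i' < i \<Longrightarrow> j' < j \<Longrightarrow>
      \<not> cycle4_active Z P L (j, i, j', i')"
  shows "\<forall>c \<in> cycle4_candidates \<gamma> \<kappa>. \<not> cycle4_active Z P L c"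
proof clarify
  fix j1 i1 j2 i2
  assume "(j1, i1, j2, i2) \<in> cycle4_candidates \<gamma> \<kappa>" and active: "cycle4_active Z P L (j1, i1, j2, i2)"
  then have "i1 < \<gamma>" "i2 < \<gamma>" "i1 \<noteq> i2" "j1 < \<kappa>" "j2 < \<kappa>" "j1 \<noteq> j2"
    by (simp_all add: cycle4_candidates_def)
  then have "\<not> cycle4_active Z P L (max j1 j2, max i1 i2, min j1 j2, min i1 i2)"
    by (intro assms) (simp_all add: max_def min_def)
  then show False using active cycle4_active_iff_ordered by blast
qed

(* F stores both matrices at once: F e = (P e, L e). *)
fun activating_entries :: "nat \<Rightarrow> nat \<times> nat \<Rightarrow> (nat \<times> nat \<Rightarrow> nat \<times> nat) \<Rightarrow> (nat \<times> nat) set" where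
  "activating_entries Z (i, j) F = {a. \<exists>i' < i. \<exists>j' < j.
     cycle4_active Z (fst \<circ> F((i, j) := a)) (snd \<circ> F((i, j) := a)) (j, i, j', i')}"

lemma activating_entry_unique:
  assumes "a \<in> {0..m} \<times> {0..<Z}" "b \<in> {0..m} \<times> {0..<Z}" "i' \<noteq> i" "j' \<noteq> j"
    and "cycle4_active Z (fst \<circ> F((i, j) := a)) (snd \<circ> F((i, j) := a)) (j, i, j', i')"
    and "cycle4_active Z (fst \<circ> F((i, j) := b)) (snd \<circ> F((i, j) := b)) (j, i, j', i')"
  shows "a = b"
proof -
  have "fst a = fst b" and "(snd a + snd (F (i', j'))) mod Z = (snd b + snd (F (i', j'))) mod Z"
    using assms(3-) by (auto simp: cycle4_active_def)
  then have "fst a = fst b" and "snd a mod Z = snd b mod Z"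
    by (simp_all add: mod_add_right_eq nat_mod_eq_iff)
  then show ?thesis using assms(1,2) by (auto simp: prod_eq_iff)
qed

lemma card_activating_entries_le:
  "card ({0..m} \<times> {0..<Z} \<inter> activating_entries Z (i, j) F) \<le> i * j"
proof -
  let ?A = "{0..m} \<times> {0..<Z}"
  let ?closing = "\<lambda>(i', j'). {a \<in> ?A.
     cycle4_active Z (fst \<circ> F((i, j) := a)) (snd \<circ> F((i, j) := a)) (j, i, j', i')}"
  have "card (?A \<inter> activating_entries Z (i, j) F) \<le> card (\<Union>p \<in> {..<i} \<times> {..<j}. ?closing p)"
    by (rule card_mono) auto
  also have "\<dots> \<le> (\<Sum>p \<in> {..<i} \<times> {..<j}. card (?closing p))"
    by (rule card_UN_le) simp
  also have "\<dots> \<le> (\<Sum>p \<in> {..<i} \<times> {..<j}. 1)"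
  proof (rule sum_mono)
    fix p assume "p \<in> {..<i} \<times> {..<j}"
    then obtain i' j' where "p = (i', j')" "i' < i" "j' < j" by blast
    then show "card (?closing p) \<le> 1"
      using activating_entry_unique[of _ m Z _ i' i j' j F]
      by (auto simp: card_le_Suc0_iff_eq)
  qed
  finally show ?thesis by simp
qed

lemma activating_entries_local:
  assumes "\<And>i' j'. i' + j' < i + j \<Longrightarrow> F (i', j') = G (i', j')"
  shows "activating_entries Z (i, j) F = activating_entries Z (i, j) G"
proof -
  have "cycle4_active Z (fst \<circ> F((i, j) := a)) (snd \<circ> F((i, j) := a)) (j, i, j', i') \<longleftrightarrow>
      cycle4_active Z (fst \<circ> G((i, j) := a)) (snd \<circ> G((i, j) := a)) (j, i, j', i')"
    if "i' < i" "j' < j" for a i' j'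
    using that by (simp add: cycle4_active_def assms)
  then show ?thesis unfolding activating_entries.simps by blast
qed

definition matrices_of :: "nat \<Rightarrow> nat \<Rightarrow> (nat \<times> nat \<Rightarrow> nat \<times> nat) \<Rightarrow> (nat \<times> nat \<Rightarrow> nat) \<times> (nat \<times> nat \<Rightarrow> nat)" where
  "matrices_of \<gamma> \<kappa> F = (restrict (fst \<circ> F) (base_edges \<gamma> \<kappa>), restrict (snd \<circ> F) (base_edges \<gamma> \<kappa>))"

lemma inj_on_matrices_of: "inj_on (matrices_of \<gamma> \<kappa>) (base_edges \<gamma> \<kappa> \<rightarrow>\<^sub>E A)"
proof (rule inj_onI)
  fix F G assume F: "F \<in> base_edges \<gamma> \<kappa> \<rightarrow>\<^sub>E A" and G: "G \<in> base_edges \<gamma> \<kappa> \<rightarrow>\<^sub>E A"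
    and eq: "matrices_of \<gamma> \<kappa> F = matrices_of \<gamma> \<kappa> G"
  show "F = G"
  proof (rule PiE_ext[OF F G])
    fix e assume "e \<in> base_edges \<gamma> \<kappa>"
    then show "F e = G e"
      using fun_cong[OF arg_cong[OF eq, of fst], of e] fun_cong[OF arg_cong[OF eq, of snd], of e]
      by (simp add: matrices_of_def prod_eq_iff)
  qed
qed

lemma matrices_of_no_active_c4:
  assumes F: "F \<in> base_edges \<gamma> \<kappa> \<rightarrow>\<^sub>E {0..m} \<times> {0..<Z}"
    and good: "\<forall>e \<in> base_edges \<gamma> \<kappa>. F e \<notin> activating_entries Z e F"
  shows "matrices_of \<gamma> \<kappa> F \<in> {(P, Lm) \<in> partition_matrices \<gamma> \<kappa> m \<times> lifting_matrices \<gamma> \<kappa> Z.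
           \<forall>c \<in> cycle4_candidates \<gamma> \<kappa>. \<not> cycle4_active Z P Lm c}"
proof -
  obtain P Lm where PL: "matrices_of \<gamma> \<kappa> F = (P, Lm)" by fastforce
  have "P \<in> partition_matrices \<gamma> \<kappa> m" "Lm \<in> lifting_matrices \<gamma> \<kappa> Z"
    using PiE_mem[OF F] PL
    by (fastforce simp: matrices_of_def partition_matrices_def lifting_matrices_def)+
  moreover have "\<not> cycle4_active Z P Lm (j, i, j', i')"
    if "i < \<gamma>" "j < \<kappa>" "i' < i" "j' < j" for i j i' j'
  proof -
    have "F (i, j) \<notin> activating_entries Z (i, j) F"
      using good that by (simp add: base_edges_def)
    then show ?thesis
      using that PL by (auto simp: matrices_of_def cycle4_active_def base_edges_def)
  qed
  ultimately show ?thesis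
    using no_active_cycle4_if_no_ordered[of \<gamma> \<kappa> Z P Lm] PL by simp
qed

lemma card_no_active_c4_ge:
  "(\<Prod>(i, j)\<in>base_edges \<gamma> \<kappa>. (m + 1) * Z - i * j) \<le>
     card {(P, Lm) \<in> partition_matrices \<gamma> \<kappa> m \<times> lifting_matrices \<gamma> \<kappa> Z.
             \<forall>c \<in> cycle4_candidates \<gamma> \<kappa>. \<not> cycle4_active Z P Lm c}"
    (is "_ \<le> card ?good")
proof -
  let ?E = "base_edges \<gamma> \<kappa>" and ?A = "{0..m} \<times> {0..<Z}"
  let ?goodF = "{F \<in> ?E \<rightarrow>\<^sub>E ?A. \<forall>e\<in>?E. F e \<notin> activating_entries Z e F}"
  have "(\<Prod>e\<in>?E. card ?A - (case e of (i, j) \<Rightarrow> i * j)) \<le> card ?goodF"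
  proof (rule card_PiE_avoiding_ge[where rank = "\<lambda>(i, j). i + j"])
    show "finite ?E" "finite ?A" by (simp_all add: base_edges_def)
    show "card (?A \<inter> activating_entries Z e F) \<le> (case e of (i, j) \<Rightarrow> i * j)" for e F
      by (cases e) (simp only: card_activating_entries_le prod.case)
    show "activating_entries Z e F = activating_entries Z e G"
      if earlier: "\<And>e'. (case e' of (i, j) \<Rightarrow> i + j) < (case e of (i, j) \<Rightarrow> i + j) \<Longrightarrow> F e' = G e'"
      for e F G
    proof (cases e)
      case (Pair i j)
      have "F (i', j') = G (i', j')" if "i' + j' < i + j" for i' j'
        using earlier[of "(i', j')"] that Pair by simp
      then show ?thesis unfolding Pair by (rule activating_entries_local)
    qed
  qed
  also have "card ?goodF \<le> card ?good"
  proof (rule card_inj_on_le)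
    show "inj_on (matrices_of \<gamma> \<kappa>) ?goodF"
      by (rule inj_on_subset[OF inj_on_matrices_of]) auto
    show "matrices_of \<gamma> \<kappa> ` ?goodF \<subseteq> ?good"
    proof (rule image_subsetI)
      fix F assume "F \<in> ?goodF"
      then show "matrices_of \<gamma> \<kappa> F \<in> ?good"
        by (intro matrices_of_no_active_c4) simp_all
    qed
    show "finite ?good"
      by (rule finite_subset[of _ "partition_matrices \<gamma> \<kappa> m \<times> lifting_matrices \<gamma> \<kappa> Z"])
        (auto simp: partition_matrices_def lifting_matrices_def base_edges_def finite_PiE)
  qed
  finally show ?thesis by (simp add: case_prod_unfold)
qed

lemma card_matrix_pairs:
  "card (partition_matrices \<gamma> \<kappa> m \<times> lifting_matrices \<gamma> \<kappa> Z) = ((m + 1) * Z) ^ (\<gamma> * \<kappa>)"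
  by (simp add: partition_matrices_def lifting_matrices_def base_edges_def card_cartesian_product
      card_PiE flip: power_mult_distrib)

lemma mult_le_on_base_edges: "(i, j) \<in> base_edges \<gamma> \<kappa> \<Longrightarrow> i * j \<le> (\<gamma> - 1) * (\<kappa> - 1)"
  by (auto simp: base_edges_def intro: mult_le_mono)

lemma prob_no_active_c4_ge_prod:
  assumes "Z \<ge> 1" and "(\<gamma> - 1) * (\<kappa> - 1) \<le> (m + 1) * Z"
  shows "(\<Prod>(i, j)\<in>base_edges \<gamma> \<kappa>. 1 - real (i * j) / real ((m + 1) * Z)) \<le> prob_no_active_c4 \<gamma> \<kappa> m Z"
proof -
  define M where "M = (m + 1) * Z"
  let ?E = "base_edges \<gamma> \<kappa>"
  have "real M > 0" using assms(1) unfolding M_def by (simp only: of_nat_0_less_iff) simp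
  have "(\<Prod>(i, j)\<in>?E. 1 - real (i * j) / real M) = (\<Prod>(i, j)\<in>?E. real (M - i * j) / real M)"
  proof (rule prod.cong[OF refl], clarify)
    fix i j assume "(i, j) \<in> ?E"
    then have "i * j \<le> M" using mult_le_on_base_edges assms(2) unfolding M_def by (blast intro: le_trans)
    then show "1 - real (i * j) / real M = real (M - i * j) / real M"
      using \<open>real M > 0\<close> by (simp add: of_nat_diff diff_divide_distrib)
  qed
  also have "\<dots> = real (\<Prod>(i, j)\<in>?E. M - i * j) / real M ^ (\<gamma> * \<kappa>)"
    by (simp add: case_prod_unfold prod_dividef base_edges_def)
  also have "\<dots> \<le> prob_no_active_c4 \<gamma> \<kappa> m Z"
    unfolding prob_no_active_c4_def card_matrix_pairs of_nat_power[symmetric] M_def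
    by (intro divide_right_mono of_nat_mono card_no_active_c4_ge) simp
  finally show ?thesis unfolding M_def .
qed

lemma sum_base_edges_mult:
  "(\<Sum>(i, j)\<in>base_edges \<gamma> \<kappa>. real (i * j)) = real \<gamma> * (real \<gamma> - 1) * real \<kappa> * (real \<kappa> - 1) / 4"
proof -
  have gauss: "(\<Sum>i<n. real i) = real n * (real n - 1) / 2" for n
    by (induction n) (simp_all add: field_simps)
  have "(\<Sum>(i, j)\<in>base_edges \<gamma> \<kappa>. real (i * j)) = (\<Sum>i<\<gamma>. real i) * (\<Sum>j<\<kappa>. real j)"
    by (simp add: base_edges_def sum.cartesian_product[symmetric] sum_product atLeast0LessThan)
  then show ?thesis by (simp add: gauss)
qed

lemma prob_no_active_c4_ge_powr:
  fixes \<gamma> \<kappa> m Z \<Delta> :: nat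
  assumes "Z \<ge> 1" and "3 \<le> \<Delta>" and "(\<gamma> - 1) * (\<kappa> - 1) \<le> \<Delta>"
    and "2 / (3 * real ((m + 1) * Z)) \<le> real (\<Delta> - 1) ^ (\<Delta> - 1) / real \<Delta> ^ \<Delta>"
  shows "(1 - 2 / real \<Delta>) powr (real \<gamma> * (real \<gamma> - 1) * real \<kappa> * (real \<kappa> - 1) * real \<Delta> / 8)
           \<le> prob_no_active_c4 \<gamma> \<kappa> m Z"
proof -
  define M where "M = (m + 1) * Z"
  define S where "S = (\<Sum>(i, j)\<in>base_edges \<gamma> \<kappa>. real (i * j))"
  have "real M > 0" using assms(1) unfolding M_def by (simp only: of_nat_0_less_iff) simp
  have "2 / (3 * real M) \<le> 1 / (2 * real \<Delta>)"
    using assms(2,4) pred_power_div_power_le[of \<Delta>] unfolding M_def by linarith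
  then have "4 * real \<Delta> \<le> 3 * real M"
    using \<open>real M > 0\<close> assms(2) by (simp add: field_simps)
  then have "\<Delta> + 1 \<le> M" using assms(2) by linarith
  then have small: "real (i * j) + 1 \<le> real M" if "(i, j) \<in> base_edges \<gamma> \<kappa>" for i j
    using mult_le_on_base_edges[OF that] assms(3) by linarith
  have "S \<ge> 0" unfolding S_def by (rule sum_nonneg) auto
  have exponent: "real \<gamma> * (real \<gamma> - 1) * real \<kappa> * (real \<kappa> - 1) * real \<Delta> / 8 = S * real \<Delta> / 2"
    unfolding S_def sum_base_edges_mult by simp
  have "(1 - 2 / real \<Delta>) powr (real \<gamma> * (real \<gamma> - 1) * real \<kappa> * (real \<kappa> - 1) * real \<Delta> / 8)
      = (1 - 2 / real \<Delta>) powr (S * real \<Delta> / 2)"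
    by (simp only: exponent)
  also have "\<dots> \<le> exp (- (2 / real \<Delta> * (S * real \<Delta> / 2)))"
    using assms(2) \<open>S \<ge> 0\<close> by (intro powr_one_minus_le_exp) simp_all
  also have "\<dots> = exp (- S)"
    using assms(2) by simp
  also have "\<dots> = (\<Prod>(i, j)\<in>base_edges \<gamma> \<kappa>. exp (- real (i * j)))"
    by (simp add: S_def exp_sum base_edges_def case_prod_unfold flip: sum_negf)
  also have "\<dots> \<le> (\<Prod>(i, j)\<in>base_edges \<gamma> \<kappa>. 1 - real (i * j) / real M)"
    using small exp_neg_le_one_minus_divide by (intro prod_mono) auto
  also have "\<dots> \<le> prob_no_active_c4 \<gamma> \<kappa> m Z"
    using prob_no_active_c4_ge_prod assms(1,3) \<open>\<Delta> + 1 \<le> M\<close> unfolding M_def by simp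
  finally show ?thesis .
qed

lemma of_nat_pred_mult_pred:
  "1 \<le> \<gamma> \<Longrightarrow> 1 \<le> \<kappa> \<Longrightarrow> real ((\<gamma> - 1) * (\<kappa> - 1)) = real \<gamma> * real \<kappa> - real \<gamma> - real \<kappa> + 1"
  unfolding of_nat_mult by (simp add: of_nat_diff algebra_simps)

lemma prob_no_active_c4_ge_power:
  fixes \<gamma> \<kappa> m Z :: nat
  defines "K \<equiv> real \<gamma> * real \<kappa> - real \<gamma> - real \<kappa>"
  assumes "Z \<ge> 1" and "\<gamma> \<ge> 1" and "\<kappa> \<ge> 1" and "K \<ge> 1"
    and "2 / (3 * real ((m + 1) * Z)) \<le> 27 / (256 * K)"
  shows "(1 - (K + 1) / (4 * K)) ^ (\<gamma> * \<kappa>) \<le> prob_no_active_c4 \<gamma> \<kappa> m Z"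
proof -
  define M where "M = (m + 1) * Z"
  have "real M > 0" using assms(2) unfolding M_def by (simp only: of_nat_0_less_iff) simp
  have "4 * K \<le> real M"
    using assms(5,6) \<open>real M > 0\<close> unfolding M_def[symmetric] by (simp add: field_simps)
  have "real ((\<gamma> - 1) * (\<kappa> - 1)) = K + 1"
    using of_nat_pred_mult_pred assms(3,4) unfolding K_def by blast
  then have small: "real (i * j) \<le> K + 1" if "(i, j) \<in> base_edges \<gamma> \<kappa>" for i j
    using mult_le_on_base_edges[OF that] by (metis of_nat_le_iff)
  have "(1 - (K + 1) / (4 * K)) ^ (\<gamma> * \<kappa>) = (\<Prod>(i, j)\<in>base_edges \<gamma> \<kappa>. 1 - (K + 1) / (4 * K))"
    by (simp add: base_edges_def case_prod_unfold)
  also have "\<dots> \<le> (\<Prod>(i, j)\<in>base_edges \<gamma> \<kappa>. 1 - real (i * j) / real M)"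
  proof (rule prod_mono, clarify)
    fix i j assume "(i, j) \<in> base_edges \<gamma> \<kappa>"
    then have "real (i * j) / real M \<le> (K + 1) / (4 * K)"
      using small \<open>4 * K \<le> real M\<close> assms(5)
      by (intro frac_le) simp_all
    then show "0 \<le> 1 - (K + 1) / (4 * K) \<and> 1 - (K + 1) / (4 * K) \<le> 1 - real (i * j) / real M"
      using assms(5) by (simp add: field_simps)
  qed
  also have "\<dots> \<le> prob_no_active_c4 \<gamma> \<kappa> m Z"
  proof -
    have "real ((\<gamma> - 1) * (\<kappa> - 1)) \<le> real M"
      using \<open>real ((\<gamma> - 1) * (\<kappa> - 1)) = K + 1\<close> \<open>4 * K \<le> real M\<close> assms(5) by linarith
    then show ?thesis using prob_no_active_c4_ge_prod assms(2) unfolding M_def of_nat_le_iff by simp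
  qed
  finally show ?thesis .
qed

(* The right-hand side is the probability that a fixed candidate is active: the partition
   condition holds with probability (2m^2+4m+3)/(3(m+1)^3), the lifting condition with 1/Z. *)
lemma inverse_le_cycle4_active_prob:
  "2 / (3 * real ((m + 1) * Z)) \<le> (2 * real m ^ 2 + 4 * real m + 3) / (3 * (real m + 1) ^ 3 * real Z)"
proof -
  have "2 / (3 * real ((m + 1) * Z)) = ((real m + 1) ^ 2 * 2) / ((real m + 1) ^ 2 * (3 * real ((m + 1) * Z)))"
    by (rule mult_divide_mult_cancel_left[symmetric]) simp
  also have "\<dots> = 2 * (real m + 1) ^ 2 / (3 * (real m + 1) ^ 3 * real Z)"
    by (simp add: power2_eq_square power3_eq_cube algebra_simps)
  also have "\<dots> \<le> (2 * real m ^ 2 + 4 * real m + 3) / (3 * (real m + 1) ^ 3 * real Z)"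
    by (rule divide_right_mono) (simp_all add: power2_eq_square algebra_simps)
  finally show ?thesis .
qed

lemma base_graph_parameter_bounds:
  assumes "\<gamma> \<ge> 2" and "\<kappa> \<ge> 2" and "\<not> (\<gamma> = 2 \<and> \<kappa> = 2)"
  shows "3 \<le> (2 * \<gamma> - 3) * (2 * \<kappa> - 3)" and "(\<gamma> - 1) * (\<kappa> - 1) \<le> (2 * \<gamma> - 3) * (2 * \<kappa> - 3)"
    and "1 \<le> real \<gamma> * real \<kappa> - real \<gamma> - real \<kappa>"
proof -
  show "3 \<le> (2 * \<gamma> - 3) * (2 * \<kappa> - 3)"
    using mult_le_mono[of 3 "2 * \<gamma> - 3" 1 "2 * \<kappa> - 3"] mult_le_mono[of 1 "2 * \<gamma> - 3" 3 "2 * \<kappa> - 3"] assms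
    by linarith
  show "(\<gamma> - 1) * (\<kappa> - 1) \<le> (2 * \<gamma> - 3) * (2 * \<kappa> - 3)"
    by (intro mult_le_mono) auto
  have "2 \<le> (\<gamma> - 1) * (\<kappa> - 1)"
    using mult_le_mono[of 2 "\<gamma> - 1" 1 "\<kappa> - 1"] mult_le_mono[of 1 "\<gamma> - 1" 2 "\<kappa> - 1"] assms
    by linarith
  then have "2 \<le> real ((\<gamma> - 1) * (\<kappa> - 1))" by linarith
  then show "1 \<le> real \<gamma> * real \<kappa> - real \<gamma> - real \<kappa>"
    using of_nat_pred_mult_pred[of \<gamma> \<kappa>] assms(1,2) by linarith
qed

lemma no_active_c4_if_prob_ge_pos:
  assumes "B \<le> prob_no_active_c4 \<gamma> \<kappa> m Z" and "0 < B"
  shows "prob_no_active_c4 \<gamma> \<kappa> m Z \<ge> B \<and> prob_no_active_c4 \<gamma> \<kappa> m Z > 0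
    \<and> (\<exists>P \<in> partition_matrices \<gamma> \<kappa> m. \<exists>Lm \<in> lifting_matrices \<gamma> \<kappa> Z.
          \<forall>c \<in> cycle4_candidates \<gamma> \<kappa>. \<not> cycle4_active Z P Lm c)"
proof -
  let ?good = "{(P, Lm) \<in> partition_matrices \<gamma> \<kappa> m \<times> lifting_matrices \<gamma> \<kappa> Z.
                 \<forall>c \<in> cycle4_candidates \<gamma> \<kappa>. \<not> cycle4_active Z P Lm c}"
  have "prob_no_active_c4 \<gamma> \<kappa> m Z > 0" using assms by linarith
  moreover have "?good \<noteq> {}"
  proof
    assume empty: "?good = {}"
    show False using \<open>prob_no_active_c4 \<gamma> \<kappa> m Z > 0\<close> unfolding prob_no_active_c4_def empty by simp
  qed
  ultimately show ?thesis using assms(1) by blast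
qed

theorem corollary1:
  fixes \<gamma> \<kappa> m Lc Z :: nat
  assumes "\<gamma> \<ge> 2" and "\<kappa> \<ge> 2" and "\<not> (\<gamma> = 2 \<and> \<kappa> = 2)"
    and "Lc \<ge> m + 1" and "Z \<ge> 1"
  defines "\<Delta> \<equiv> (2 * \<gamma> - 3) * (2 * \<kappa> - 3)"
  defines "I \<equiv> real (\<Delta> - 1) ^ (\<Delta> - 1) / real \<Delta> ^ \<Delta>"
  defines "II \<equiv> 27 / (256 * (real \<gamma> * real \<kappa> - real \<gamma> - real \<kappa>))"
  assumes "(2 * real m ^ 2 + 4 * real m + 3) / (3 * (real m + 1) ^ 3 * real Z) \<le> max I II"
  shows "prob_no_active_c4 \<gamma> \<kappa> m Z \<ge>
           (if I > II
            then (1 - 2 / real \<Delta>) powr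
                   (real \<gamma> * (real \<gamma> - 1) * real \<kappa> * (real \<kappa> - 1) * real \<Delta> / 8)
            else (1 - (real \<gamma> * real \<kappa> - real \<gamma> - real \<kappa> + 1)
                        / (4 * (real \<gamma> * real \<kappa> - real \<gamma> - real \<kappa>))) ^ (\<gamma> * \<kappa>))
       \<and> prob_no_active_c4 \<gamma> \<kappa> m Z > 0
       \<and> (\<exists>P \<in> partition_matrices \<gamma> \<kappa> m. \<exists>Lm \<in> lifting_matrices \<gamma> \<kappa> Z.
            \<forall>c \<in> cycle4_candidates \<gamma> \<kappa>. \<not> cycle4_active Z P Lm c)"
proof (rule no_active_c4_if_prob_ge_pos, goal_cases)
  \<comment> \<open>The coupling length Lc does not enter prob_no_active_c4.\<close>
  have \<Delta>: "3 \<le> \<Delta>" "(\<gamma> - 1) * (\<kappa> - 1) \<le> \<Delta>" and K: "1 \<le> real \<gamma> * real \<kappa> - real \<gamma> - real \<kappa>"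
    using base_graph_parameter_bounds[OF assms(1-3)] unfolding \<Delta>_def by simp_all
  have threshold: "2 / (3 * real ((m + 1) * Z)) \<le> max I II"
    using inverse_le_cycle4_active_prob assms(9) by (rule order_trans)
  case 1
  show ?case
  proof (cases "I > II")
    case True
    then show ?thesis using threshold prob_no_active_c4_ge_powr assms(5) \<Delta> unfolding I_def by simp
  next
    case False
    then show ?thesis using threshold prob_no_active_c4_ge_power assms(1,2,5) K unfolding II_def by simp
  qed
  case 2
  show ?case using \<Delta> K by (simp add: field_simps)
qed

end
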